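(* Let $b(\lambda)=\frac14\lambda^4+\frac12p\lambda^2+q\lambda$ with $p<0$, $q\in\mathbb{R}$, let $b^*(\eta)=\sup_{\lambda}[\eta\lambda-b(\lambda)]$, and $A(x,r,\eta)=b(x)+b(r)-\eta(x+r)+2b^*(\eta)$. If $|x|=\sqrt{-p}$, then $A(x,-x,\eta)=(\eta-q)h(\eta)$ for a function $h$ satisfying $|h(\eta)|\approx(1+|\eta|)^{1/3}$ for all $\eta\in\mathbb{R}$.
   Context: $X\approx Y$ means $cY\le X\le c^{-1}Y$ for some $c>0$ independent of $\eta$ (it may depend on $p,q$). *)

theory Defs
  imports "HOL-Analysis.Analysis"
begin

definition bfun :: "real \<Rightarrow> real \<Rightarrow> real \<Rightarrow> real" where
  "bfun p q l = l ^ 4 / 4 + p * l ^ 2 / 2 + q * l"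

definition bstar :: "real \<Rightarrow> real \<Rightarrow> real \<Rightarrow> real" where
  "bstar p q \<eta> = (SUP l. \<eta> * l - bfun p q l)"

definition Afun :: "real \<Rightarrow> real \<Rightarrow> real \<Rightarrow> real \<Rightarrow> real \<Rightarrow> real" where
  "Afun p q x r \<eta> = bfun p q x + bfun p q r - \<eta> * (x + r) + 2 * bstar p q \<eta>"

end

theory Submission
  imports Defs
begin

text \<open>
  Write \<open>p = -a\<^sup>2\<close>. Then \<open>b(\<lambda>) = W(\<lambda>) - a\<^sup>4/4 + q\<lambda>\<close> for the double well
  \<open>W(\<lambda>) = (\<lambda>\<^sup>2 - a\<^sup>2)\<^sup>2/4\<close>, so \<open>b\<^sup>*(\<eta>) = a\<^sup>4/4 + W\<^sup>*(\<eta> - q)\<close>, and since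
  \<open>W(\<plusminus>a) = 0\<close> one gets \<open>A(x,-x,\<eta>) = 2 W\<^sup>*(\<eta> - q)\<close>. The Legendre transform \<open>W\<^sup>*(t)\<close>
  is comparable to \<open>|t| (1 + |t|)\<^bsup>1/3\<^esup>\<close>: for small \<open>|t|\<close> the wells at \<open>\<plusminus>a\<close> already
  give \<open>a|t|\<close>, while for large \<open>|t|\<close> the quartic growth of \<open>W\<close> balances \<open>t\<lambda>\<close> at
  \<open>|\<lambda>| \<approx> |t|\<^bsup>1/3\<^esup>\<close>. So \<open>h(\<eta>) = 2 W\<^sup>*(\<eta> - q)/(\<eta> - q)\<close>, and shifting the
  argument by \<open>q\<close> only changes the constants.
\<close>

lemma cSUP_const_add:
  fixes f :: "'a \<Rightarrow> real"
  assumes "bdd_above (range f)"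
  shows "(SUP x. c + f x) = c + (SUP x. f x)"
proof (rule antisym)
  show "(SUP x. c + f x) \<le> c + (SUP x. f x)"
    by (rule cSUP_least) (auto intro: cSUP_upper[OF _ assms])
  have "bdd_above (range (\<lambda>x. c + f x))"
    using assms by (auto simp: bdd_above_def intro: add_left_mono)
  then have "(SUP x. f x) \<le> (SUP x. c + f x) - c"
    by (intro cSUP_least) (auto simp: le_diff_eq intro: cSUP_upper2)
  then show "c + (SUP x. f x) \<le> (SUP x. c + f x)"
    by linarith
qed

lemma cbrt_one_plus_abs_ge_one: "(1 + \<bar>t :: real\<bar>) powr (1/3) \<ge> 1"
  by (simp add: ge_one_powr_ge_zero)

lemma cbrt_one_plus_abs_cube: "((1 + \<bar>t :: real\<bar>) powr (1/3)) ^ 3 = 1 + \<bar>t\<bar>"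
proof -
  have "((1 + \<bar>t\<bar>) powr (1/3)) ^ 3 = ((1 + \<bar>t\<bar>) powr (1/3)) powr (real 3)"
    by (simp add: powr_realpow)
  also have "\<dots> = 1 + \<bar>t\<bar>"
    by (simp add: powr_powr)
  finally show ?thesis .
qed

lemma cbrt_one_plus_abs_add_le:
  fixes x y :: real
  shows "(1 + \<bar>x + y\<bar>) powr (1/3) \<le> (1 + \<bar>y\<bar>) * (1 + \<bar>x\<bar>) powr (1/3)"
proof -
  have "1 + \<bar>x + y\<bar> \<le> (1 + \<bar>y\<bar>) * (1 + \<bar>x\<bar>)"
    using abs_triangle_ineq[of x y] abs_ge_zero[of "x * y"]
    by (simp only: abs_mult ring_distribs mult_1_left mult_1_right mult.commute)
  then have "(1 + \<bar>x + y\<bar>) powr (1/3) \<le> ((1 + \<bar>y\<bar>) * (1 + \<bar>x\<bar>)) powr (1/3)"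
    by (intro powr_mono2) auto
  also have "\<dots> = (1 + \<bar>y\<bar>) powr (1/3) * (1 + \<bar>x\<bar>) powr (1/3)"
    by (simp add: powr_mult)
  also have "\<dots> \<le> (1 + \<bar>y\<bar>) * (1 + \<bar>x\<bar>) powr (1/3)"
    using powr_mono[of "1/3" 1 "1 + \<bar>y\<bar>"] by (intro mult_right_mono) auto
  finally show ?thesis .
qed

lemma comparable_cbrt_shift:
  fixes f :: "real \<Rightarrow> real" and c q :: real
  assumes "c > 0"
    and "\<And>t. c * (1 + \<bar>t\<bar>) powr (1/3) \<le> f t \<and> f t \<le> (1 / c) * (1 + \<bar>t\<bar>) powr (1/3)"
  shows "\<exists>c' > 0. \<forall>t. c' * (1 + \<bar>t\<bar>) powr (1/3) \<le> f (t - q) \<and>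
                      f (t - q) \<le> (1 / c') * (1 + \<bar>t\<bar>) powr (1/3)"
proof (intro exI conjI allI)
  define Q where "Q = 1 + \<bar>q\<bar>"
  show "c / Q > 0"
    using assms(1) by (simp add: Q_def)
  fix t :: real
  have "c / Q * (1 + \<bar>t\<bar>) powr (1/3) \<le> c / Q * (Q * (1 + \<bar>t - q\<bar>) powr (1/3))"
    using cbrt_one_plus_abs_add_le[of "t - q" q] assms(1)
    by (intro mult_left_mono) (simp_all add: Q_def)
  also have "\<dots> = c * (1 + \<bar>t - q\<bar>) powr (1/3)"
    by (simp add: Q_def)
  also have "\<dots> \<le> f (t - q)"
    using assms(2) by blast
  finally show "c / Q * (1 + \<bar>t\<bar>) powr (1/3) \<le> f (t - q)" .
  have "f (t - q) \<le> (1 / c) * (1 + \<bar>t - q\<bar>) powr (1/3)"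
    using assms(2) by blast
  also have "\<dots> \<le> (1 / c) * (Q * (1 + \<bar>t\<bar>) powr (1/3))"
    using cbrt_one_plus_abs_add_le[of t "- q"] assms(1)
    by (intro mult_left_mono) (simp_all add: Q_def)
  also have "\<dots> = (1 / (c / Q)) * (1 + \<bar>t\<bar>) powr (1/3)"
    by simp
  finally show "f (t - q) \<le> (1 / (c / Q)) * (1 + \<bar>t\<bar>) powr (1/3)" .
qed

lemma quartic_le_double_well:
  fixes a l :: real
  assumes "2 * \<bar>a\<bar> \<le> \<bar>l\<bar>"
  shows "l ^ 4 / 8 \<le> (l\<^sup>2 - a\<^sup>2)\<^sup>2 / 4"
proof -
  have "(2 * \<bar>a\<bar>)\<^sup>2 \<le> \<bar>l\<bar>\<^sup>2"
    using assms by (intro power_mono) auto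
  then have "3/4 * l\<^sup>2 \<le> l\<^sup>2 - a\<^sup>2"
    by (simp add: power_mult_distrib)
  then have "(3/4 * l\<^sup>2)\<^sup>2 \<le> (l\<^sup>2 - a\<^sup>2)\<^sup>2"
    by (intro power_mono) auto
  moreover have "(3/4 * l\<^sup>2)\<^sup>2 = 9/16 * l ^ 4"
    by (simp add: power2_eq_square eval_nat_numeral)
  moreover have "0 \<le> l ^ 4"
    by simp
  ultimately show ?thesis
    by linarith
qed

lemma abs_mult_le_quartic:
  fixes t l :: real
  assumes "2 * (1 + \<bar>t\<bar>) powr (1/3) \<le> \<bar>l\<bar>"
  shows "\<bar>t\<bar> * \<bar>l\<bar> \<le> l ^ 4 / 8"
proof -
  have "(2 * (1 + \<bar>t\<bar>) powr (1/3)) ^ 3 \<le> \<bar>l\<bar> ^ 3"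
    using assms by (intro power_mono) auto
  then have "8 * (1 + \<bar>t\<bar>) \<le> \<bar>l\<bar> ^ 3"
    by (simp add: power_mult_distrib cbrt_one_plus_abs_cube)
  then have "\<bar>l\<bar> * (8 * \<bar>t\<bar>) \<le> \<bar>l\<bar> * \<bar>l\<bar> ^ 3"
    by (intro mult_left_mono) auto
  then show ?thesis
    by (simp add: mult_ac flip: power_Suc)
qed

lemma double_well_gap_le:
  fixes a t l :: real
  assumes "a \<ge> 0"
  shows "t * l - (l\<^sup>2 - a\<^sup>2)\<^sup>2 / 4 \<le> (2 * a + 2) * (1 + \<bar>t\<bar>) powr (1/3) * \<bar>t\<bar>"
proof -
  define s where "s = (1 + \<bar>t\<bar>) powr (1/3)"
  have s1: "s \<ge> 1"
    unfolding s_def by (rule cbrt_one_plus_abs_ge_one)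
  have tl: "t * l \<le> \<bar>t\<bar> * \<bar>l\<bar>"
    by (simp flip: abs_mult)
  have "t * l - (l\<^sup>2 - a\<^sup>2)\<^sup>2 / 4 \<le> (2 * a + 2) * s * \<bar>t\<bar>"
  proof (cases "\<bar>l\<bar> \<le> 2 * a + 2 * s")
    case True
    have "\<bar>t\<bar> * \<bar>l\<bar> \<le> \<bar>t\<bar> * (2 * a + 2 * s)"
      using True by (intro mult_left_mono) auto
    also have "\<dots> \<le> (2 * a + 2) * s * \<bar>t\<bar>"
    proof -
      have "0 \<le> a * \<bar>t\<bar> * (s - 1)"
        using s1 assms by simp
      then show ?thesis
        by (simp add: algebra_simps)
    qed
    finally show ?thesis
      using tl zero_le_power2[of "l\<^sup>2 - a\<^sup>2"] by linarith
  next
    case False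
    then have "\<bar>t\<bar> * \<bar>l\<bar> \<le> l ^ 4 / 8"
      using assms unfolding s_def by (intro abs_mult_le_quartic) auto
    also have "\<dots> \<le> (l\<^sup>2 - a\<^sup>2)\<^sup>2 / 4"
      using False s1 assms by (intro quartic_le_double_well) auto
    finally have "\<bar>t\<bar> * \<bar>l\<bar> \<le> (l\<^sup>2 - a\<^sup>2)\<^sup>2 / 4" .
    moreover have "0 \<le> (2 * a + 2) * s * \<bar>t\<bar>"
      using s1 assms by simp
    ultimately show ?thesis
      using tl by linarith
  qed
  then show ?thesis
    by (simp add: s_def)
qed

lemma double_well_gap_abs:
  fixes a t m :: real
  obtains l where "t * l - (l\<^sup>2 - a\<^sup>2)\<^sup>2 / 4 = \<bar>t\<bar> * m - (m\<^sup>2 - a\<^sup>2)\<^sup>2 / 4"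
proof (cases "t < 0")
  case True
  then show ?thesis
    using that[of "- m"] by simp
next
  case False
  then show ?thesis
    using that[of m] by simp
qed

lemma double_well_gap_at_half_cbrt:
  fixes a t :: real
  defines "s \<equiv> (1 + \<bar>t\<bar>) powr (1/3)"
  assumes "a \<ge> 0" and "2 * max 1 a < s"
  shows "min (1/4) (a/2) * s * \<bar>t\<bar> \<le> \<bar>t\<bar> * (s/2) - ((s/2)\<^sup>2 - a\<^sup>2)\<^sup>2 / 4"
proof -
  have s1: "s \<ge> 1" and s3: "s ^ 3 = 1 + \<bar>t\<bar>"
    unfolding s_def by (rule cbrt_one_plus_abs_ge_one cbrt_one_plus_abs_cube)+
  have "1 \<le> \<bar>t\<bar>"
    using s3 assms(3) power_mono[of 2 s 3] by (auto simp: max_def split: if_splits)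
  have "s ^ 4 = s * (1 + \<bar>t\<bar>)"
    by (simp flip: s3 power_Suc)
  also have "\<dots> \<le> s * (2 * \<bar>t\<bar>)"
    using \<open>1 \<le> \<bar>t\<bar>\<close> s1 by (intro mult_left_mono) auto
  finally have s4: "s ^ 4 \<le> 2 * s * \<bar>t\<bar>"
    by simp
  have "(2 * a)\<^sup>2 \<le> s\<^sup>2"
    using assms(2,3) by (intro power_mono) auto
  then have "(s\<^sup>2 / 4 - a\<^sup>2)\<^sup>2 \<le> (s\<^sup>2 / 4)\<^sup>2"
    using assms(2) by (intro power_mono) (auto simp: power_mult_distrib)
  also have "\<dots> = s ^ 4 / 16"
    by (simp add: power_divide flip: power_mult)
  finally have "((s/2)\<^sup>2 - a\<^sup>2)\<^sup>2 / 4 \<le> s * \<bar>t\<bar> / 32"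
    using s4 by (simp add: power_divide)
  moreover have "min (1/4) (a/2) * (s * \<bar>t\<bar>) \<le> 1/4 * (s * \<bar>t\<bar>)"
    using s1 by (intro mult_right_mono) auto
  moreover have "0 \<le> s * \<bar>t\<bar>"
    using s1 by simp
  ultimately show ?thesis
    by (simp add: mult.commute[of "\<bar>t\<bar>"] mult.assoc)
qed

text \<open>The witness is a well bottom \<open>\<plusminus>a\<close> for small \<open>|t|\<close>, and \<open>\<plusminus>(1 + |t|)\<^bsup>1/3\<^esup>/2\<close> otherwise.\<close>

lemma double_well_gap_ge:
  fixes a t :: real
  assumes "a > 0"
  obtains l where "min (1/4) (a/2) * (1 + \<bar>t\<bar>) powr (1/3) * \<bar>t\<bar> \<le> t * l - (l\<^sup>2 - a\<^sup>2)\<^sup>2 / 4"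
proof -
  define s where "s = (1 + \<bar>t\<bar>) powr (1/3)"
  have "\<exists>m. min (1/4) (a/2) * s * \<bar>t\<bar> \<le> \<bar>t\<bar> * m - (m\<^sup>2 - a\<^sup>2)\<^sup>2 / 4"
  proof (cases "s \<le> 2 * max 1 a")
    case True
    then have "min (1/4) (a/2) * s \<le> a"
      using assms by (auto simp: min_def max_def split: if_splits)
    then have "min (1/4) (a/2) * s * \<bar>t\<bar> \<le> \<bar>t\<bar> * a - (a\<^sup>2 - a\<^sup>2)\<^sup>2 / 4"
      by (simp add: mult_right_mono mult.commute[of "\<bar>t\<bar>"])
    then show ?thesis ..
  next
    case False
    then have "min (1/4) (a/2) * s * \<bar>t\<bar> \<le> \<bar>t\<bar> * (s/2) - ((s/2)\<^sup>2 - a\<^sup>2)\<^sup>2 / 4"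
      using assms unfolding s_def by (intro double_well_gap_at_half_cbrt) auto
    then show ?thesis ..
  qed
  then show ?thesis
    using that double_well_gap_abs unfolding s_def by metis
qed

lemma bdd_above_double_well_gap:
  fixes a t :: real
  shows "bdd_above (range (\<lambda>l. t * l - (l\<^sup>2 - a\<^sup>2)\<^sup>2 / 4))"
  using double_well_gap_le[of "\<bar>a\<bar>" t] by (intro bdd_aboveI2) simp

definition well_conj :: "real \<Rightarrow> real \<Rightarrow> real" where
  "well_conj a t = (SUP l. t * l - (l\<^sup>2 - a\<^sup>2)\<^sup>2 / 4)"

lemma well_conj_le:
  fixes a t :: real
  assumes "a \<ge> 0"
  shows "well_conj a t \<le> (2 * a + 2) * (1 + \<bar>t\<bar>) powr (1/3) * \<bar>t\<bar>"
  unfolding well_conj_def by (rule cSUP_least) (simp_all add: double_well_gap_le[OF assms])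

lemma well_conj_ge:
  fixes a t :: real
  assumes "a > 0"
  shows "min (1/4) (a/2) * (1 + \<bar>t\<bar>) powr (1/3) * \<bar>t\<bar> \<le> well_conj a t"
proof -
  obtain l where "min (1/4) (a/2) * (1 + \<bar>t\<bar>) powr (1/3) * \<bar>t\<bar> \<le> t * l - (l\<^sup>2 - a\<^sup>2)\<^sup>2 / 4"
    using double_well_gap_ge[OF assms] .
  then show ?thesis
    unfolding well_conj_def by (rule cSUP_upper2[OF bdd_above_double_well_gap UNIV_I])
qed

lemma bstar_neg_square:
  fixes a q \<eta> :: real
  shows "bstar (- a\<^sup>2) q \<eta> = a ^ 4 / 4 + well_conj a (\<eta> - q)"
proof -
  have "\<eta> * l - bfun (- a\<^sup>2) q l = a ^ 4 / 4 + ((\<eta> - q) * l - (l\<^sup>2 - a\<^sup>2)\<^sup>2 / 4)" for l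
    unfolding bfun_def by (simp add: field_simps power2_eq_square eval_nat_numeral)
  then show ?thesis
    unfolding bstar_def well_conj_def by (simp add: cSUP_const_add bdd_above_double_well_gap)
qed

lemma Afun_antipodal:
  fixes a q x \<eta> :: real
  assumes "x\<^sup>2 = a\<^sup>2"
  shows "Afun (- a\<^sup>2) q x (- x) \<eta> = 2 * well_conj a (\<eta> - q)"
proof -
  have "x ^ 4 = a ^ 4"
    using assms by (metis power_mult numeral_Bit0 mult_2_right)
  then show ?thesis
    unfolding Afun_def bstar_neg_square bfun_def using assms by (simp add: algebra_simps)
qed

text \<open>The value at \<open>t = 0\<close> is immaterial, since \<open>well_conj a 0 = 0\<close>.\<close>

definition well_slope :: "real \<Rightarrow> real \<Rightarrow> real" where
  "well_slope a t = (if t = 0 then 1 else 2 * well_conj a t / t)"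

lemma well_conj_eq_slope:
  fixes a t :: real
  assumes "a > 0"
  shows "2 * well_conj a t = t * well_slope a t"
  using well_conj_le[of a 0] well_conj_ge[OF assms, of 0] assms
  by (auto simp: well_slope_def)

lemma well_slope_bounds:
  fixes a t :: real
  assumes "a > 0"
  shows "min (1/2) a * (1 + \<bar>t\<bar>) powr (1/3) \<le> \<bar>well_slope a t\<bar>"
    and "\<bar>well_slope a t\<bar> \<le> (4 * a + 4) * (1 + \<bar>t\<bar>) powr (1/3)"
proof -
  define s where "s = (1 + \<bar>t\<bar>) powr (1/3)"
  have "s \<ge> 1"
    unfolding s_def by (rule cbrt_one_plus_abs_ge_one)
  have "min (1/2) a * s \<le> \<bar>well_slope a t\<bar> \<and> \<bar>well_slope a t\<bar> \<le> (4 * a + 4) * s"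
  proof (cases "t = 0")
    case True
    then show ?thesis
      using assms by (simp add: s_def well_slope_def)
  next
    case False
    have "min (1/2) a = 2 * min (1/4) (a/2)"
      by (simp add: min_def)
    then have lower: "min (1/2) a * s * \<bar>t\<bar> \<le> 2 * well_conj a t"
      using well_conj_ge[OF assms, of t] by (simp add: s_def)
    have "(4 * a + 4) * s * \<bar>t\<bar> = 2 * ((2 * a + 2) * s * \<bar>t\<bar>)"
      by (simp add: algebra_simps)
    then have upper: "2 * well_conj a t \<le> (4 * a + 4) * s * \<bar>t\<bar>"
      using well_conj_le[of a t, folded s_def] assms by linarith
    have "0 \<le> min (1/2) a * s * \<bar>t\<bar>"
      using \<open>s \<ge> 1\<close> assms by simp
    then have "0 \<le> 2 * well_conj a t"
      using lower by linarith
    then have "\<bar>well_slope a t\<bar> * \<bar>t\<bar> = 2 * well_conj a t"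
      using False by (simp add: well_slope_def abs_divide)
    then have "min (1/2) a * s * \<bar>t\<bar> \<le> \<bar>well_slope a t\<bar> * \<bar>t\<bar>"
      and "\<bar>well_slope a t\<bar> * \<bar>t\<bar> \<le> (4 * a + 4) * s * \<bar>t\<bar>"
      using lower upper by simp_all
    then show ?thesis
      using False by (auto intro: mult_right_le_imp_le)
  qed
  then show "min (1/2) a * (1 + \<bar>t\<bar>) powr (1/3) \<le> \<bar>well_slope a t\<bar>"
    and "\<bar>well_slope a t\<bar> \<le> (4 * a + 4) * (1 + \<bar>t\<bar>) powr (1/3)"
    by (simp_all add: s_def)
qed

lemma well_slope_comparable:
  fixes a :: real
  assumes "a > 0"
  shows "\<exists>c > 0. \<forall>t. c * (1 + \<bar>t\<bar>) powr (1/3) \<le> \<bar>well_slope a t\<bar> \<and>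
                     \<bar>well_slope a t\<bar> \<le> (1 / c) * (1 + \<bar>t\<bar>) powr (1/3)"
proof (intro exI conjI allI)
  define c where "c = min (min (1/2) a) (1 / (4 * a + 4))"
  have "c > 0"
    using assms by (simp add: c_def)
  then show "c > 0" .
  have "c \<le> 1 / (4 * a + 4)"
    unfolding c_def by (rule min.cobounded2)
  then have "4 * a + 4 \<le> 1 / c"
    using \<open>c > 0\<close> assms by (simp add: le_divide_eq mult.commute)
  fix t :: real
  have "c * (1 + \<bar>t\<bar>) powr (1/3) \<le> min (1/2) a * (1 + \<bar>t\<bar>) powr (1/3)"
    unfolding c_def by (intro mult_right_mono) auto
  then show "c * (1 + \<bar>t\<bar>) powr (1/3) \<le> \<bar>well_slope a t\<bar>"
    using well_slope_bounds(1)[OF assms, of t] by linarith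
  have "(4 * a + 4) * (1 + \<bar>t\<bar>) powr (1/3) \<le> (1 / c) * (1 + \<bar>t\<bar>) powr (1/3)"
    using \<open>4 * a + 4 \<le> 1 / c\<close> by (intro mult_right_mono) auto
  then show "\<bar>well_slope a t\<bar> \<le> (1 / c) * (1 + \<bar>t\<bar>) powr (1/3)"
    using well_slope_bounds(2)[OF assms, of t] by linarith
qed

theorem proposition6p4:
  fixes p q x :: real
  assumes "p < 0"
    and "\<bar>x\<bar> = sqrt (- p)"
  shows "\<exists>h :: real \<Rightarrow> real. \<exists>c > 0.
           (\<forall>\<eta>. Afun p q x (- x) \<eta> = (\<eta> - q) * h \<eta>) \<and>
           (\<forall>\<eta>. c * (1 + \<bar>\<eta>\<bar>) powr (1/3) \<le> \<bar>h \<eta>\<bar> \<and>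
                 \<bar>h \<eta>\<bar> \<le> (1 / c) * (1 + \<bar>\<eta>\<bar>) powr (1/3))"
proof -
  define a where "a = sqrt (- p)"
  have "a > 0" and p: "p = - a\<^sup>2"
    using assms(1) by (simp_all add: a_def)
  have "x\<^sup>2 = a\<^sup>2"
    using assms(2) unfolding a_def by (metis power2_abs)
  obtain c where "c > 0" and slope_bounds:
    "\<forall>t. c * (1 + \<bar>t\<bar>) powr (1/3) \<le> \<bar>well_slope a t\<bar> \<and>
         \<bar>well_slope a t\<bar> \<le> (1 / c) * (1 + \<bar>t\<bar>) powr (1/3)"
    using well_slope_comparable[OF \<open>a > 0\<close>] by blast
  obtain c' where "c' > 0" and shifted_bounds:
    "\<forall>\<eta>. c' * (1 + \<bar>\<eta>\<bar>) powr (1/3) \<le> \<bar>well_slope a (\<eta> - q)\<bar> \<and>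
         \<bar>well_slope a (\<eta> - q)\<bar> \<le> (1 / c') * (1 + \<bar>\<eta>\<bar>) powr (1/3)"
    using comparable_cbrt_shift[of c "\<lambda>t. \<bar>well_slope a t\<bar>" q] \<open>c > 0\<close> slope_bounds by blast
  have "Afun p q x (- x) \<eta> = (\<eta> - q) * well_slope a (\<eta> - q)" for \<eta>
    unfolding p Afun_antipodal[OF \<open>x\<^sup>2 = a\<^sup>2\<close>] well_conj_eq_slope[OF \<open>a > 0\<close>] ..
  then show ?thesis
    using \<open>c' > 0\<close> shifted_bounds by (intro exI[of _ "\<lambda>\<eta>. well_slope a (\<eta> - q)"]) blast
qed

end
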